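(* Let $G$ be a group with generating set $S$ not containing the identity, and let $d_C$ be the cardinal metric on $G$ with respect to $S$. Then $\{L_a\circ\tau : a\in G,\ \tau\in\mathrm{Aut}(G,S)\}\subseteq \mathrm{Iso}(G,d_C)$, where $L_a(g)=ag$, $\mathrm{Aut}(G,S)$ is the group of automorphisms $\tau$ of $G$ with $\tau(S)=S$, and $\mathrm{Iso}(G,d_C)$ is the set of isometries of $(G,d_C)$ onto itself.
   Context: The cardinal norm is $\|x\| = \min\{|A| : A\subseteq S,\ x\in\langle A\rangle\}$, where $\langle A\rangle$ is the subgroup generated by $A$, and $d_C(g,h)=\|g^{-1}h\|$. *)

theory Defs
  imports "HOL-Algebra.Algebra"
begin

text \<open>Elements of a generated subgroup
  are finite products, so the minimum is always attained by a finite A; we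
  therefore range over finite A, where card is the genuine cardinality.\<close>
definition cardinal_norm :: "('a, 'b) monoid_scheme \<Rightarrow> 'a set \<Rightarrow> 'a \<Rightarrow> nat" where
  "cardinal_norm G S x =
     (LEAST n. \<exists>A. A \<subseteq> S \<and> finite A \<and> card A = n \<and> x \<in> generate G A)"

definition cardinal_dist :: "('a, 'b) monoid_scheme \<Rightarrow> 'a set \<Rightarrow> 'a \<Rightarrow> 'a \<Rightarrow> nat" where
  "cardinal_dist G S g h = cardinal_norm G S (inv\<^bsub>G\<^esub> g \<otimes>\<^bsub>G\<^esub> h)"

definition Aut_S :: "('a, 'b) monoid_scheme \<Rightarrow> 'a set \<Rightarrow> ('a \<Rightarrow> 'a) set" where
  "Aut_S G S = {\<tau>. \<tau> \<in> iso G G \<and> \<tau> ` S = S}"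

definition left_transl :: "('a, 'b) monoid_scheme \<Rightarrow> 'a \<Rightarrow> 'a \<Rightarrow> 'a" where
  "left_transl G a = (\<lambda>g. a \<otimes>\<^bsub>G\<^esub> g)"

definition isometries :: "'a set \<Rightarrow> ('a \<Rightarrow> 'a \<Rightarrow> nat) \<Rightarrow> ('a \<Rightarrow> 'a) set" where
  "isometries M \<delta> = {f. bij_betw f M M \<and> (\<forall>x\<in>M. \<forall>y\<in>M. \<delta> (f x) (f y) = \<delta> x y)}"

end

theory Submission
  imports Defs
begin

text \<open>The cardinal norm is defined from the group structure and S alone, so an isomorphism
  carrying S onto T carries the norm for S to the norm for T.\<close>

lemma isometries_comp:
  assumes "f \<in> isometries M \<delta>" and "g \<in> isometries M \<delta>"
  shows "f \<circ> g \<in> isometries M \<delta>"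
  using assms by (auto simp: isometries_def intro: bij_betw_trans dest: bij_betwE)

lemma cardinal_norm_iso:
  assumes "group G" and "group H" and \<phi>: "\<phi> \<in> iso G H"
    and S: "S \<subseteq> carrier G" and z: "z \<in> carrier G"
  shows "cardinal_norm H (\<phi> ` S) (\<phi> z) = cardinal_norm G S z"
proof -
  interpret group_hom G H \<phi>
    using assms(1,2) \<phi> by (simp add: group_hom_def group_hom_axioms_def iso_def)
  have inj: "inj_on \<phi> (carrier G)"
    using \<phi> by (simp add: iso_def bij_betw_def)
  have "(\<exists>B. B \<subseteq> \<phi> ` S \<and> finite B \<and> card B = n \<and> \<phi> z \<in> generate H B) \<longleftrightarrow>
        (\<exists>A. A \<subseteq> S \<and> finite A \<and> card A = n \<and> z \<in> generate G A)" for n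
  proof
    assume "\<exists>B. B \<subseteq> \<phi> ` S \<and> finite B \<and> card B = n \<and> \<phi> z \<in> generate H B"
    then obtain A where A: "A \<subseteq> S" "finite (\<phi> ` A)" "card (\<phi> ` A) = n"
      and gen: "\<phi> z \<in> generate H (\<phi> ` A)"
      by (auto simp: subset_image_iff)
    have injA: "inj_on \<phi> A"
      using inj A(1) S by (rule inj_on_subset[OF _ subset_trans])
    from gen obtain w where w: "w \<in> generate G A" "\<phi> z = \<phi> w"
      using generate_img A(1) S by auto
    have "w \<in> carrier G"
      using G.generate_in_carrier A(1) S w(1) by blast
    with inj z w(2) have "z = w"
      by (auto dest: inj_onD)
    with A injA w(1) show "\<exists>A. A \<subseteq> S \<and> finite A \<and> card A = n \<and> z \<in> generate G A"
      by (metis card_image finite_imageD)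
  next
    assume "\<exists>A. A \<subseteq> S \<and> finite A \<and> card A = n \<and> z \<in> generate G A"
    then obtain A where A: "A \<subseteq> S" "finite A" "card A = n" "z \<in> generate G A"
      by blast
    have "inj_on \<phi> A"
      using inj A(1) S by (rule inj_on_subset[OF _ subset_trans])
    moreover have "\<phi> z \<in> generate H (\<phi> ` A)"
      using generate_img A(1,4) S by auto
    ultimately show "\<exists>B. B \<subseteq> \<phi> ` S \<and> finite B \<and> card B = n \<and> \<phi> z \<in> generate H B"
      using A by (metis card_image finite_imageI image_mono)
  qed
  then show ?thesis
    by (simp add: cardinal_norm_def)
qed

lemma cardinal_dist_iso:
  assumes "group G" and "group H" and \<phi>: "\<phi> \<in> iso G H"
    and "S \<subseteq> carrier G" and "x \<in> carrier G" and "y \<in> carrier G"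
  shows "cardinal_dist H (\<phi> ` S) (\<phi> x) (\<phi> y) = cardinal_dist G S x y"
proof -
  interpret group_hom G H \<phi>
    using assms(1,2) \<phi> by (simp add: group_hom_def group_hom_axioms_def iso_def)
  have "cardinal_dist H (\<phi> ` S) (\<phi> x) (\<phi> y)
        = cardinal_norm H (\<phi> ` S) (\<phi> (inv\<^bsub>G\<^esub> x \<otimes>\<^bsub>G\<^esub> y))"
    using assms(5,6) by (simp add: cardinal_dist_def)
  also have "\<dots> = cardinal_dist G S x y"
    unfolding cardinal_dist_def using assms(5,6) by (intro cardinal_norm_iso[OF assms(1-4)]) simp
  finally show ?thesis .
qed

lemma Aut_S_isometries:
  assumes "group G" and "S \<subseteq> carrier G" and "\<tau> \<in> Aut_S G S"
  shows "\<tau> \<in> isometries (carrier G) (cardinal_dist G S)"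
  using assms cardinal_dist_iso[of G G \<tau> S]
  by (auto simp: Aut_S_def isometries_def iso_def)

lemma (in group) cardinal_dist_left_transl:
  assumes "a \<in> carrier G" and "x \<in> carrier G" and "y \<in> carrier G"
  shows "cardinal_dist G S (a \<otimes> x) (a \<otimes> y) = cardinal_dist G S x y"
proof -
  have "inv (a \<otimes> x) \<otimes> (a \<otimes> y) = inv x \<otimes> (inv a \<otimes> (a \<otimes> y))"
    using assms by (simp add: inv_mult_group m_assoc)
  also have "\<dots> = inv x \<otimes> y"
    using assms by (simp add: m_assoc[symmetric])
  finally show ?thesis
    by (simp add: cardinal_dist_def)
qed

lemma (in group) bij_betw_left_transl:
  assumes "a \<in> carrier G"
  shows "bij_betw (left_transl G a) (carrier G) (carrier G)"
proof (rule bij_betw_byWitness[where f' = "left_transl G (inv a)"])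
  show "\<forall>x\<in>carrier G. left_transl G (inv a) (left_transl G a x) = x"
    and "\<forall>y\<in>carrier G. left_transl G a (left_transl G (inv a) y) = y"
    using assms by (simp_all add: left_transl_def m_assoc[symmetric])
  show "left_transl G a ` carrier G \<subseteq> carrier G"
    and "left_transl G (inv a) ` carrier G \<subseteq> carrier G"
    using assms by (auto simp: left_transl_def)
qed

lemma (in group) left_transl_isometries:
  assumes "a \<in> carrier G"
  shows "left_transl G a \<in> isometries (carrier G) (cardinal_dist G S)"
  using assms bij_betw_left_transl cardinal_dist_left_transl
  by (simp add: isometries_def left_transl_def)

theorem mainTheorem12:
  fixes G (structure) and S :: "'a set"
  assumes "group G"
    and "S \<subseteq> carrier G"
    and "generate G S = carrier G"
    and "\<one>\<^bsub>G\<^esub> \<notin> S"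
  shows "{left_transl G a \<circ> \<tau> | a \<tau>. a \<in> carrier G \<and> \<tau> \<in> Aut_S G S}
           \<subseteq> isometries (carrier G) (cardinal_dist G S)"
  using group.left_transl_isometries[OF assms(1)] Aut_S_isometries[OF assms(1,2)]
  by (auto intro: isometries_comp)

end
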